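(* Let $E$ be a finite-dimensional complex Hilbert space, $e\in E$ a unit vector, $\tau\in(0,1)$, and let $T_0\in B(E)_+$ be strictly positive. Define $$T_{n+1}:=T_n^{1/2}\bigl(I_E-\tau|e\rangle\langle e|\bigr)T_n^{1/2}\qquad(n\ge0),$$ and $T_\infty:=\lim_nT_n$. Let $\mathcal{K}$ be the maximal $T_0$-reducing subspace contained in $e^\perp$, and assume $\dim\mathcal{K}^\perp=2$. Then, with respect to $E=\mathcal{K}\oplus\mathcal{K}^\perp$, $$T_\infty=T_0|_{\mathcal{K}}\oplus0.$$
   Context: For vectors $x,y$, $|x\rangle\langle y|$ denotes the operator $z\mapsto\langle y,z\rangle x$. $B(E)_+$ denotes positive operators; $T^{1/2}$ is the positive square root. A subspace reduces an operator if it and its orthogonal complement are invariant. The sequence $(T_n)$ is decreasing in the operator order, so the norm limit exists. *)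

theory Defs
  imports "HOL-Analysis.Analysis"
begin

text \<open>The finite-dimensional complex Hilbert space E is modelled as complex^'n
  (with 'n a finite index type); operators on E are matrices complex^'n^'n acting by *v.\<close>

definition cinner :: "complex^'n \<Rightarrow> complex^'n \<Rightarrow> complex" where
  "cinner x y = (\<Sum>i\<in>UNIV. cnj (x$i) * y$i)"

text \<open>The rank-one operator |x><y| : z maps to <y,z> x.\<close>
definition ketbra :: "complex^'n \<Rightarrow> complex^'n \<Rightarrow> complex^'n^'n" where
  "ketbra x y = (\<chi> i j. x$i * cnj (y$j))"

definition orth :: "(complex^'n) set \<Rightarrow> (complex^'n) set" where
  "orth M = {x. \<forall>y\<in>M. cinner y x = 0}"

definition pos_op :: "complex^'n^'n \<Rightarrow> bool" where
  "pos_op A \<longleftrightarrow> (\<forall>x. Im (cinner x (A *v x)) = 0 \<and> Re (cinner x (A *v x)) \<ge> 0)"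

definition strictly_pos_op :: "complex^'n^'n \<Rightarrow> bool" where
  "strictly_pos_op A \<longleftrightarrow> pos_op A \<and> (\<forall>x. x \<noteq> 0 \<longrightarrow> Re (cinner x (A *v x)) > 0)"

definition psqrt :: "complex^'n^'n \<Rightarrow> complex^'n^'n" where
  "psqrt A = (THE S. pos_op S \<and> S ** S = A)"

definition reduces :: "complex^'n^'n \<Rightarrow> (complex^'n) set \<Rightarrow> bool" where
  "reduces T M \<longleftrightarrow> vec.subspace M \<and> (\<lambda>x. T *v x) ` M \<subseteq> M
      \<and> (\<lambda>x. T *v x) ` orth M \<subseteq> orth M"

definition max_reducing :: "complex^'n^'n \<Rightarrow> (complex^'n) set \<Rightarrow> (complex^'n) set" where
  "max_reducing T S = (THE K. reduces T K \<and> K \<subseteq> S \<and>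
      (\<forall>M. reduces T M \<and> M \<subseteq> S \<longrightarrow> M \<subseteq> K))"

end

theory Submission
  imports Defs
begin

text \<open>The step T(n+1) = sqrt (T n) (I - \<tau> |e><e|) sqrt (T n) lowers the quadratic form of T n at x
  by \<tau> |<e, sqrt (T n) x>|^2, so the T n decrease and converge. Every T n agrees with T0 on K,
  which reduces T0 and is orthogonal to e, and leaves the plane orth K = span {e, f} invariant.
  There the matrix [a b; cnj b d] of T n has its determinant multiplied by 1 - \<tau> in each step,
  its trace lowered by \<tau> a, so a is summable, and |b|^2 \<le> a d. If d stayed above some l > 0, the
  bound det \<ge> l a would keep |b|^2 / det bounded, whereas once a is small this ratio grows
  geometrically. This needs det > 0 at time 0 (strict positivity of T0) and b \<noteq> 0 at time 0
  (otherwise K + span {f} would be a larger reducing subspace inside orth {e}).\<close>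

subsection \<open>The inner product\<close>

lemma scaleR_eq_of_real_smult: "r *\<^sub>R (x::complex^'n) = of_real r *s x"
  unfolding vec_eq_iff vector_scalar_mult_def by (simp add: scaleR_conv_of_real[where 'a=complex])

lemma cinner_add_right: "cinner x (y + z) = cinner x y + cinner x z"
  by (simp add: cinner_def distrib_left sum.distrib)

lemma cinner_add_left: "cinner (x + y) z = cinner x z + cinner y z"
  by (simp add: cinner_def distrib_right sum.distrib)

lemma cinner_diff_right: "cinner x (y - z) = cinner x y - cinner x z"
  by (simp add: cinner_def right_diff_distrib sum_subtractf)

lemma cinner_diff_left: "cinner (x - y) z = cinner x z - cinner y z"
  by (simp add: cinner_def left_diff_distrib sum_subtractf)

lemma cinner_scale_right: "cinner x (c *s y) = c * cinner x y"
  by (simp add: cinner_def sum_distrib_left algebra_simps)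

lemma cinner_scale_left: "cinner (c *s x) y = cnj c * cinner x y"
  by (simp add: cinner_def sum_distrib_left algebra_simps)

lemma cinner_scaleR_right: "cinner x (r *\<^sub>R y) = of_real r * cinner x y"
  by (simp add: scaleR_eq_of_real_smult cinner_scale_right)

lemma cinner_scaleR_left: "cinner (r *\<^sub>R x) y = of_real r * cinner x y"
  by (simp add: scaleR_eq_of_real_smult cinner_scale_left)

lemma cinner_minus_right: "cinner x (- y) = - cinner x y"
  by (simp add: cinner_def sum_negf)

lemma cinner_minus_left: "cinner (- x) y = - cinner x y"
  by (simp add: cinner_def sum_negf)

lemma cinner_zero_right [simp]: "cinner x 0 = 0"
  by (simp add: cinner_def)

lemma cinner_zero_left [simp]: "cinner 0 x = 0"
  by (simp add: cinner_def)

lemma cinner_sum_right: "cinner x (sum f A) = (\<Sum>a\<in>A. cinner x (f a))"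
  by (induction A rule: infinite_finite_induct) (auto simp: cinner_add_right)

lemmas cinner_simps = cinner_add_right cinner_add_left cinner_diff_right cinner_diff_left
  cinner_scale_right cinner_scale_left cinner_scaleR_right cinner_scaleR_left
  cinner_minus_right cinner_minus_left

lemma cinner_commute: "cinner y x = cnj (cinner x y)"
  by (simp add: cinner_def mult.commute)

lemma cinner_eq_zero_commute: "cinner y x = 0 \<longleftrightarrow> cinner x y = 0"
  by (metis cinner_commute complex_cnj_zero_iff)

lemma cnj_mult_self: "cnj c * c = of_real ((cmod c)^2)"
  by (metis complex_norm_square mult.commute)

lemma cinner_self: "cinner x x = of_real ((norm x)^2)"
proof -
  have "cinner x x = (\<Sum>i\<in>UNIV. of_real ((cmod (x$i))^2))"
    unfolding cinner_def by (simp add: cnj_mult_self)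
  also have "\<dots> = of_real ((norm x)^2)"
    unfolding norm_vec_def L2_set_def by (simp add: sum_nonneg)
  finally show ?thesis .
qed

lemma cinner_self_eq_zero [simp]: "cinner x x = 0 \<longleftrightarrow> x = 0"
  by (simp add: cinner_self)

lemma cinner_unit: "norm u = 1 \<Longrightarrow> cinner u u = 1"
  by (simp add: cinner_self)

lemma norm_cinner_le: "cmod (cinner x y) \<le> norm x * norm y"
proof -
  have "cmod (cinner x y) \<le> (\<Sum>i\<in>UNIV. cmod (x$i) * cmod (y$i))"
    unfolding cinner_def by (rule order_trans[OF norm_sum]) (simp add: norm_mult)
  also have "\<dots> \<le> L2_set (\<lambda>i. cmod (x$i)) UNIV * L2_set (\<lambda>i. cmod (y$i)) UNIV"
    using L2_set_mult_ineq[of "\<lambda>i. cmod (x$i)" "\<lambda>i. cmod (y$i)" UNIV] by simp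
  finally show ?thesis by (simp add: norm_vec_def)
qed

lemma cinner_axis_left: "cinner (axis i 1) v = v $ i"
proof -
  have "cinner (axis i 1) v = (\<Sum>k\<in>UNIV. if k = i then v $ k else 0)"
    unfolding cinner_def by (intro sum.cong) (auto simp: axis_def)
  then show ?thesis by simp
qed

lemma scaleR_matrix_vector_mult: "(r *\<^sub>R A) *v (x::complex^'n) = r *\<^sub>R (A *v x)"
  by (simp add: vec_eq_iff matrix_vector_mult_def scaleR_sum_right)

lemma ketbra_apply: "ketbra x y *v z = cinner y z *s x"
  by (simp add: vec_eq_iff ketbra_def matrix_vector_mult_def cinner_def sum_distrib_left algebra_simps)

subsection \<open>Hermitian and positive operators\<close>

definition herm :: "complex^'n^'n \<Rightarrow> bool" where
  "herm A \<longleftrightarrow> (\<forall>x y. cinner x (A *v y) = cinner (A *v x) y)"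

lemma herm_diff: "herm A \<Longrightarrow> herm B \<Longrightarrow> herm (A - B)"
  unfolding herm_def by (simp add: matrix_vector_mult_diff_rdistrib cinner_simps)

lemma herm_cinner_real: "herm A \<Longrightarrow> cinner u (A *v u) = of_real (Re (cinner u (A *v u)))"
  unfolding herm_def by (metis cinner_commute complex_cnj_cnj complex_eq_iff cnj.sel(2) neg_equal_zero
      Im_complex_of_real Re_complex_of_real)

lemma cinner_quadratic_expand:
  fixes A :: "complex^'n^'n"
  assumes "herm A"
  shows "Re (cinner (x + c *s w) (A *v (x + c *s w))) = Re (cinner x (A *v x))
     + 2 * Re (c * cinner x (A *v w)) + (cmod c)^2 * Re (cinner w (A *v w))"
proof -
  have "cinner w (A *v x) = cnj (cinner x (A *v w))"
    using assms unfolding herm_def by (metis cinner_commute)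
  then have "cinner (x + c *s w) (A *v (x + c *s w)) = cinner x (A *v x)
      + (c * cinner x (A *v w) + cnj (c * cinner x (A *v w))) + cnj c * c * cinner w (A *v w)"
    by (simp add: matrix_vector_right_distrib vector_scalar_commute cinner_simps algebra_simps)
  moreover have "Re (cnj c * c * z) = (cmod c)^2 * Re z" for z
    by (simp add: cnj_mult_self)
  ultimately show ?thesis by simp
qed

lemma quadratic_nonneg_discriminant:
  fixes B :: complex and P C :: real
  assumes nonneg: "\<And>c. 0 \<le> P + 2 * Re (c * B) + (cmod c)^2 * C" and "C \<ge> 0"
  shows "(cmod B)^2 \<le> P * C"
proof (cases "C = 0")
  case True
  have "B = 0"
  proof (rule ccontr)
    assume "B \<noteq> 0"
    have "0 \<le> P + 2 * Re (of_real (- (P + 1) / (2 * (cmod B)^2)) * cnj B * B)"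
      using nonneg[of "of_real (- (P + 1) / (2 * (cmod B)^2)) * cnj B"] True
      by (simp add: mult.assoc)
    also have "\<dots> = -1"
      using \<open>B \<noteq> 0\<close> by (simp add: mult.assoc cnj_mult_self del: of_real_divide) (simp add: field_simps)
    finally show False by simp
  qed
  then show ?thesis using True by simp
next
  case False
  then have C: "C > 0" using assms(2) by simp
  have "(- cnj B / of_real C) * B = of_real (-((cmod B)^2) / C)"
    by (simp add: cnj_mult_self)
  then have re: "Re ((- cnj B / of_real C) * B) = -((cmod B)^2) / C"
    by (metis Re_complex_of_real)
  have sq: "(cmod (- cnj B / of_real C))^2 * C = (cmod B)^2 / C"
    using C by (simp add: norm_divide power2_eq_square)
  have "0 \<le> P - (cmod B)^2 / C"
    using nonneg[of "- cnj B / of_real C"] unfolding re sq by simp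
  then show ?thesis using C by (simp add: field_simps)
qed

lemma quadratic_nonpos_imp_zero:
  fixes g :: complex and K :: real
  assumes nonpos: "\<And>c. 2 * Re (c * g) + (cmod c)^2 * K \<le> 0"
  shows "g = 0"
proof -
  have "0 \<le> 0 + 2 * Re (c * g) + (cmod c)^2 * (- K)" for c
    using nonpos[of "- c"] by simp
  moreover have "- K \<ge> 0"
    using nonpos[of 1] nonpos[of "- 1"] by simp
  ultimately have "(cmod g)^2 \<le> 0 * (- K)"
    by (rule quadratic_nonneg_discriminant)
  then show ?thesis by simp
qed

lemma pos_op_herm:
  fixes A :: "complex^'n^'n"
  assumes "pos_op A" shows "herm A"
  unfolding herm_def
proof (intro allI)
  fix x y :: "complex^'n"
  define f where "f = (\<lambda>x y. cinner x (A *v y))"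
  have real: "Im (f z z) = 0" for z using assms unfolding pos_op_def f_def by blast
  have expand: "f (x + c *s y) (x + c *s y) = f x x + c * f x y + cnj c * f y x + cnj c * c * f y y" for c
    unfolding f_def by (simp add: matrix_vector_right_distrib vector_scalar_commute cinner_simps algebra_simps)
  have "Im (f x y + f y x) = 0"
    using real[of "x + 1 *s y"] expand[of 1] real[of x] real[of y] by simp
  moreover have "Re (f x y - f y x) = 0"
    using real[of "x + \<i> *s y"] expand[of "\<i>"] real[of x] real[of y] by simp
  ultimately have "f y x = cnj (f x y)"
    by (simp add: complex_eq_iff)
  then show "cinner x (A *v y) = cinner (A *v x) y"
    unfolding f_def by (metis cinner_commute complex_cnj_cnj)
qed

lemma pos_op_cauchy_schwarz:
  assumes "pos_op S"
  shows "(cmod (cinner x (S *v y)))^2 \<le> Re (cinner x (S *v x)) * Re (cinner y (S *v y))"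
proof (rule quadratic_nonneg_discriminant)
  fix c
  show "0 \<le> Re (cinner x (S *v x)) + 2 * Re (c * cinner x (S *v y)) + (cmod c)^2 * Re (cinner y (S *v y))"
    using assms cinner_quadratic_expand[OF pos_op_herm[OF assms], of x c y]
    unfolding pos_op_def by metis
  show "0 \<le> Re (cinner y (S *v y))" using assms unfolding pos_op_def by blast
qed

lemma pos_op_form_eq_zero:
  assumes "pos_op S" "Re (cinner u (S *v u)) = 0"
  shows "S *v u = 0"
  using pos_op_cauchy_schwarz[OF assms(1), of "S *v u" u] assms(2) by simp

lemma pos_op_sandwich:
  assumes "herm R" "pos_op M"
  shows "pos_op (R ** M ** R)"
proof -
  have "cinner x ((R ** M ** R) *v x) = cinner (R *v x) (M *v (R *v x))" for x
    using assms(1) unfolding herm_def by (simp add: matrix_vector_mul_assoc[symmetric])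
  then show ?thesis using assms(2) unfolding pos_op_def by simp
qed

lemma pos_op_id_minus_rank_one:
  fixes e :: "complex^'n"
  assumes "norm e = 1" "0 \<le> \<tau>" "\<tau> \<le> 1"
  shows "pos_op (mat 1 - \<tau> *\<^sub>R ketbra e e)"
  unfolding pos_op_def
proof
  fix y :: "complex^'n"
  have "cinner y ((mat 1 - \<tau> *\<^sub>R ketbra e e) *v y) = of_real ((norm y)^2 - \<tau> * (cmod (cinner e y))^2)"
    by (simp add: matrix_vector_mult_diff_rdistrib scaleR_matrix_vector_mult
        ketbra_apply cinner_simps cinner_self
        cinner_commute[of y e] complex_norm_square[unfolded of_real_power])
  moreover have "\<tau> * (cmod (cinner e y))^2 \<le> (norm y)^2"
  proof -
    have "(cmod (cinner e y))^2 \<le> (norm y)^2"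
      using norm_cinner_le[of e y] assms(1) by (simp add: power_mono)
    then show ?thesis using assms(2,3) by (meson mult_left_le_one_le order_trans zero_le_power2)
  qed
  ultimately show "Im (cinner y ((mat 1 - \<tau> *\<^sub>R ketbra e e) *v y)) = 0
      \<and> 0 \<le> Re (cinner y ((mat 1 - \<tau> *\<^sub>R ketbra e e) *v y))"
    by simp
qed

subsection \<open>Orthonormal eigenbases\<close>

definition onb :: "(complex^'n) set \<Rightarrow> (complex^'n) set \<Rightarrow> bool" where
  "onb B V \<longleftrightarrow> finite B \<and> B \<subseteq> V \<and> (\<forall>u\<in>B. norm u = 1)
     \<and> (\<forall>u\<in>B. \<forall>v\<in>B. u \<noteq> v \<longrightarrow> cinner u v = 0)
     \<and> (\<forall>x\<in>V. x = (\<Sum>u\<in>B. cinner u x *s u))"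

lemma onb_insert:
  assumes V: "vec.subspace V" and x0: "x0 \<in> V" "norm x0 = 1"
    and B: "onb B {x\<in>V. cinner x0 x = 0}"
  shows "onb (insert x0 B) V"
proof -
  have B_orth: "cinner x0 u = 0" "cinner u x0 = 0" if "u \<in> B" for u
    using B that cinner_eq_zero_commute unfolding onb_def by blast+
  have x0_notin: "x0 \<notin> B"
    using B_orth x0(2) by (metis cinner_unit zero_neq_one)
  have "x = (\<Sum>u\<in>insert x0 B. cinner u x *s u)" if x: "x \<in> V" for x
  proof -
    define x' where "x' = x - cinner x0 x *s x0"
    have "x' \<in> V" "cinner x0 x' = 0"
      unfolding x'_def using x x0 V by (simp_all add: vec.subspace_diff vec.subspace_scale cinner_simps cinner_unit)
    then have "x' = (\<Sum>u\<in>B. cinner u x' *s u)" using B unfolding onb_def by blast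
    also have "\<dots> = (\<Sum>u\<in>B. cinner u x *s u)"
      unfolding x'_def by (intro sum.cong refl) (simp add: cinner_simps B_orth)
    finally show ?thesis
      using B x0_notin unfolding onb_def x'_def by (simp add: algebra_simps)
  qed
  then show ?thesis
    using B x0 B_orth cinner_eq_zero_commute unfolding onb_def by auto
qed

lemma rayleigh_max_exists:
  fixes A :: "complex^'n^'n"
  assumes V: "vec.subspace V" and v: "v \<in> V" "v \<noteq> 0"
  shows "\<exists>x0\<in>V. norm x0 = 1 \<and>
    (\<forall>y\<in>V. Re (cinner y (A *v y)) \<le> Re (cinner x0 (A *v x0)) * (norm y)^2)"
proof -
  define S where "S = V \<inter> sphere 0 1"
  have "(1 / norm v) *\<^sub>R v \<in> V"
    using v V by (simp add: scaleR_eq_of_real_smult vec.subspace_scale)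
  then have "(1 / norm v) *\<^sub>R v \<in> S"
    unfolding S_def using v by simp
  moreover have "compact S"
    unfolding S_def using V
    by (intro closed_Int_compact compact_sphere closed_subspace)
      (simp add: vec.subspace_def real_vector.subspace_def scaleR_eq_of_real_smult)
  moreover have "continuous_on S (\<lambda>x. Re (cinner x (A *v x)))"
    unfolding cinner_def matrix_vector_mult_def by (intro continuous_intros)
  ultimately obtain x0 where x0: "x0 \<in> S" and max: "\<forall>y\<in>S. Re (cinner y (A *v y)) \<le> Re (cinner x0 (A *v x0))"
    using continuous_attains_sup[of S] by blast
  have "Re (cinner y (A *v y)) \<le> Re (cinner x0 (A *v x0)) * (norm y)^2" if y: "y \<in> V" for y
  proof (cases "y = 0")
    case False
    define r where "r = 1 / norm y"
    have "r *\<^sub>R y \<in> V"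
      using y V by (simp add: scaleR_eq_of_real_smult vec.subspace_scale)
    then have "r *\<^sub>R y \<in> S"
      unfolding S_def r_def using False by simp
    moreover have "Re (cinner (r *\<^sub>R y) (A *v (r *\<^sub>R y))) = r^2 * Re (cinner y (A *v y))"
      by (simp add: scaleR_eq_of_real_smult vector_scalar_commute cinner_scale_left cinner_scale_right
          power2_eq_square)
    ultimately have "r^2 * Re (cinner y (A *v y)) \<le> Re (cinner x0 (A *v x0))"
      using max by metis
    then show ?thesis using False unfolding r_def by (simp add: field_simps)
  qed simp
  then show ?thesis using x0 unfolding S_def by auto
qed

lemma rayleigh_max_eigenvector:
  fixes A :: "complex^'n^'n"
  assumes herm: "herm A" and V: "vec.subspace V" "\<And>x. x \<in> V \<Longrightarrow> A *v x \<in> V"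
    and x0: "x0 \<in> V" "norm x0 = 1"
    and max: "\<forall>y\<in>V. Re (cinner y (A *v y)) \<le> Re (cinner x0 (A *v x0)) * (norm y)^2"
  shows "A *v x0 = cinner x0 (A *v x0) *s x0"
proof -
  define \<mu> where "\<mu> = Re (cinner x0 (A *v x0))"
  have x0x0: "cinner x0 x0 = 1" using x0 by (simp add: cinner_unit)
  have herm_id: "herm (mat 1 :: complex^'n^'n)" by (simp add: herm_def)
  \<comment> \<open>first variation of the Rayleigh quotient at its maximum\<close>
  have orth: "cinner x0 (A *v w) = 0" if w: "w \<in> V" "cinner x0 w = 0" for w
  proof (rule quadratic_nonpos_imp_zero[where K = "Re (cinner w (A *v w)) - \<mu> * (norm w)^2"])
    fix c :: complex
    have "x0 + c *s w \<in> V" using V x0 w by (simp add: vec.subspace_add vec.subspace_scale)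
    then have "Re (cinner (x0 + c *s w) (A *v (x0 + c *s w))) \<le> \<mu> * (norm (x0 + c *s w))^2"
      using max unfolding \<mu>_def by blast
    moreover have "(norm (x0 + c *s w))^2 = 1 + (cmod c)^2 * (norm w)^2"
      using cinner_quadratic_expand[OF herm_id, of x0 c w] w(2) x0(2)
      by (simp add: cinner_self)
    ultimately show "2 * Re (c * cinner x0 (A *v w)) + (cmod c)^2 * (Re (cinner w (A *v w)) - \<mu> * (norm w)^2) \<le> 0"
      unfolding cinner_quadratic_expand[OF herm] \<mu>_def by (simp add: algebra_simps)
  qed
  define w0 where "w0 = A *v x0 - cinner x0 (A *v x0) *s x0"
  have w0: "w0 \<in> V" "cinner x0 w0 = 0"
    unfolding w0_def using V x0 by (simp_all add: vec.subspace_diff vec.subspace_scale cinner_simps x0x0)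
  then have "cinner (A *v x0) w0 = 0"
    using orth herm unfolding herm_def by metis
  then have "cinner (A *v x0 - cinner x0 (A *v x0) *s x0) w0 = 0"
    using w0(2) by (simp add: cinner_simps)
  then have "cinner w0 w0 = 0"
    by (simp only: w0_def[symmetric])
  then show ?thesis unfolding w0_def by simp
qed

lemma herm_eigenbasis:
  fixes A :: "complex^'n^'n"
  assumes "herm A"
  shows "vec.subspace V \<Longrightarrow> (\<And>x. x \<in> V \<Longrightarrow> A *v x \<in> V) \<Longrightarrow>
    \<exists>B. onb B V \<and> (\<forall>u\<in>B. A *v u = of_real (Re (cinner u (A *v u))) *s u)"
proof (induction "vec.dim V" arbitrary: V rule: less_induct)
  case less
  show ?case
  proof (cases "\<exists>v\<in>V. v \<noteq> 0")
    case False
    then show ?thesis by (intro exI[of _ "{}"]) (auto simp: onb_def)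
  next
    case True
    then obtain x0 where x0: "x0 \<in> V" "norm x0 = 1"
      and max: "\<forall>y\<in>V. Re (cinner y (A *v y)) \<le> Re (cinner x0 (A *v x0)) * (norm y)^2"
      using rayleigh_max_exists[OF less.prems(1)] by blast
    have eig: "A *v x0 = of_real (Re (cinner x0 (A *v x0))) *s x0"
      using rayleigh_max_eigenvector[OF assms less.prems x0 max] herm_cinner_real[OF assms] by metis
    define V' where "V' = {x\<in>V. cinner x0 x = 0}"
    have V': "vec.subspace V'"
      using less.prems(1) unfolding V'_def vec.subspace_def by (auto simp: cinner_simps)
    have "A *v x \<in> V'" if "x \<in> V'" for x
    proof -
      have "cinner x0 (A *v x) = cinner (A *v x0) x" using assms unfolding herm_def by blast
      then show ?thesis
        using that less.prems(2) unfolding V'_def by (subst (asm) eig) (simp add: cinner_simps)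
    qed
    moreover have "vec.dim V' < vec.dim V"
    proof -
      have "x0 \<in> V - V'" using x0 unfolding V'_def by (simp add: cinner_unit)
      then have "V' \<subset> V" unfolding V'_def by blast
      then show ?thesis
        using vec.dim_psubset[of V' V] V' less.prems(1) by (metis vec.span_eq_iff)
    qed
    ultimately obtain B where "onb B V'" "\<forall>u\<in>B. A *v u = of_real (Re (cinner u (A *v u))) *s u"
      using less.hyps V' by blast
    then show ?thesis
      using onb_insert[OF less.prems(1) x0] eig unfolding V'_def by (intro exI[of _ "insert x0 B"]) auto
  qed
qed

lemma onb_UNIV_expand: "onb B UNIV \<Longrightarrow> x = (\<Sum>u\<in>B. cinner u x *s u)"
  unfolding onb_def by blast

lemma onb_UNIV_apply: "onb B UNIV \<Longrightarrow> A *v x = (\<Sum>u\<in>B. cinner u x *s (A *v u))"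
  by (subst onb_UNIV_expand, assumption) (simp add: vec.sum vector_scalar_commute)

lemma matrix_eq_on_onb:
  assumes "onb B UNIV" "\<And>u. u \<in> B \<Longrightarrow> A *v u = C *v u"
  shows "A = C"
  unfolding matrix_eq using onb_UNIV_apply[OF assms(1)] assms(2) by (metis (no_types, lifting) sum.cong)

subsection \<open>The positive square root\<close>

lemma sum_matrix_vector_mult: "(\<Sum>u\<in>B. M u) *v (x::complex^'n) = (\<Sum>u\<in>B. M u *v x)"
  by (induction B rule: infinite_finite_induct) (auto simp: matrix_vector_mult_add_rdistrib)

lemma sum_ketbra_apply:
  "(\<Sum>u\<in>B. ketbra (c u *s u) u) *v x = (\<Sum>u\<in>B. (c u * cinner u x) *s u)"
  unfolding sum_matrix_vector_mult ketbra_apply by (simp add: vector_smult_assoc mult.commute)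

lemma sum_ketbra_apply_eigenvector:
  fixes A :: "complex^'n^'n"
  assumes herm: "herm A" and B: "onb B UNIV" and B_eigen: "\<And>u. u \<in> B \<Longrightarrow> A *v u = of_real (\<mu> u) *s u"
    and w: "A *v w = of_real \<nu> *s w"
  shows "(\<Sum>u\<in>B. ketbra (of_real (g (\<mu> u)) *s u) u) *v w = of_real (g \<nu>) *s w"
proof -
  \<comment> \<open>eigenvectors for distinct eigenvalues are orthogonal\<close>
  have "g (\<mu> u) * cinner u w = g \<nu> * cinner u w" if u: "u \<in> B" for u
  proof -
    have "of_real (\<mu> u) * cinner u w = cinner (A *v u) w" using B_eigen[OF u] by (simp add: cinner_scale_left)
    also have "\<dots> = cinner u (A *v w)" using herm unfolding herm_def by metis
    also have "\<dots> = of_real \<nu> * cinner u w" unfolding w by (simp add: cinner_scale_right)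
    finally show ?thesis by auto
  qed
  then have "(\<Sum>u\<in>B. ketbra (of_real (g (\<mu> u)) *s u) u) *v w = of_real (g \<nu>) *s (\<Sum>u\<in>B. cinner u w *s u)"
    unfolding sum_ketbra_apply vec.scale_sum_right vector_smult_assoc by (intro sum.cong) simp_all
  then show ?thesis using onb_UNIV_expand[OF B] by metis
qed

lemma pos_op_sqrt_exists:
  fixes A :: "complex^'n^'n"
  assumes pos: "pos_op A"
  shows "\<exists>S. pos_op S \<and> S ** S = A \<and>
    (\<forall>w \<nu>. A *v w = of_real \<nu> *s w \<longrightarrow> S *v w = of_real (sqrt \<nu>) *s w)"
proof -
  have herm: "herm A" by (rule pos_op_herm[OF pos])
  obtain B where B: "onb B UNIV" "\<forall>u\<in>B. A *v u = of_real (Re (cinner u (A *v u))) *s u"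
    using herm_eigenbasis[OF herm, of UNIV] by auto
  define \<mu> where "\<mu> u = Re (cinner u (A *v u))" for u
  have A_u: "A *v u = of_real (\<mu> u) *s u" if "u \<in> B" for u
    using B(2) that unfolding \<mu>_def by blast
  have \<mu>_nonneg: "\<mu> u \<ge> 0" for u using pos unfolding pos_op_def \<mu>_def by blast
  define S where "S = (\<Sum>u\<in>B. ketbra (of_real (sqrt (\<mu> u)) *s u) u)"
  have S_eigen: "S *v w = of_real (sqrt \<nu>) *s w" if "A *v w = of_real \<nu> *s w" for w \<nu>
    unfolding S_def using herm B(1) A_u that by (rule sum_ketbra_apply_eigenvector)
  have "S ** S = A"
  proof (rule matrix_eq_on_onb[OF B(1)])
    fix u assume u: "u \<in> B"
    have sq: "sqrt (\<mu> u) * sqrt (\<mu> u) = \<mu> u" using \<mu>_nonneg[of u] by simp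
    have "(S ** S) *v u = of_real (sqrt (\<mu> u)) *s (of_real (sqrt (\<mu> u)) *s u)"
      using S_eigen[OF A_u[OF u]] by (simp add: matrix_vector_mul_assoc[symmetric] vector_scalar_commute)
    also have "\<dots> = A *v u"
      unfolding A_u[OF u] vector_smult_assoc of_real_mult[symmetric] sq ..
    finally show "(S ** S) *v u = A *v u" .
  qed
  moreover have "pos_op S"
    unfolding pos_op_def
  proof
    fix x
    have "cinner x (S *v x) = of_real (\<Sum>u\<in>B. sqrt (\<mu> u) * (cmod (cinner u x))^2)"
      unfolding S_def sum_ketbra_apply cinner_sum_right cinner_scale_right
      by (simp add: cinner_commute[of x] complex_norm_square[unfolded of_real_power] mult.assoc)
    moreover have "(\<Sum>u\<in>B. sqrt (\<mu> u) * (cmod (cinner u x))^2) \<ge> 0"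
      using \<mu>_nonneg by (intro sum_nonneg) simp
    ultimately show "Im (cinner x (S *v x)) = 0 \<and> 0 \<le> Re (cinner x (S *v x))" by simp
  qed
  ultimately show ?thesis using S_eigen by blast
qed

lemma sqrt_preserves_invariant_subspace:
  fixes A S :: "complex^'n^'n"
  assumes herm: "herm A"
    and S: "\<And>w \<nu>. A *v w = of_real \<nu> *s w \<Longrightarrow> S *v w = of_real (sqrt \<nu>) *s w"
    and V: "vec.subspace V" "\<And>x. x \<in> V \<Longrightarrow> A *v x \<in> V" and x: "x \<in> V"
  shows "S *v x \<in> V"
proof -
  obtain C where C: "onb C V" "\<forall>w\<in>C. A *v w = of_real (Re (cinner w (A *v w))) *s w"
    using herm_eigenbasis[OF herm V] by blast
  have S_w: "S *v w = of_real (sqrt (Re (cinner w (A *v w)))) *s w" if "w \<in> C" for w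
    using S C(2) that by blast
  have "x = (\<Sum>w\<in>C. cinner w x *s w)"
    using C(1) x unfolding onb_def by blast
  then have "S *v x = S *v (\<Sum>w\<in>C. cinner w x *s w)"
    by (rule arg_cong)
  also have "\<dots> = (\<Sum>w\<in>C. cinner w x *s (S *v w))"
    by (simp add: vec.sum vector_scalar_commute)
  also have "\<dots> \<in> V"
    using C(1) V(1) unfolding onb_def by (intro vec.subspace_sum) (auto simp: S_w vec.subspace_scale)
  finally show ?thesis .
qed

lemma pos_op_sqrt_unique:
  fixes S1 S2 :: "complex^'n^'n"
  assumes pos: "pos_op S1" "pos_op S2" and eq: "S1 ** S1 = S2 ** S2"
  shows "S1 = S2"
proof -
  define D where "D = S1 - S2"
  have herm: "herm D" unfolding D_def using pos by (intro herm_diff pos_op_herm)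
  obtain B where B: "onb B UNIV" "\<forall>u\<in>B. D *v u = of_real (Re (cinner u (D *v u))) *s u"
    using herm_eigenbasis[OF herm, of UNIV] by auto
  have "D *v u = 0 *v u" if u: "u \<in> B" for u
  proof -
    define \<mu> where "\<mu> = Re (cinner u (D *v u))"
    have D_u: "D *v u = of_real \<mu> *s u"
      using B(2) u unfolding \<mu>_def by blast
    \<comment> \<open>S1 D + D S2 = S1 S1 - S2 S2 = 0, tested against the eigenvector u\<close>
    have "S1 *v (D *v u) + D *v (S2 *v u) = (S1 ** S1) *v u - (S2 ** S2) *v u"
      unfolding D_def by (simp add: matrix_vector_mult_diff_rdistrib matrix_vector_mult_diff_distrib
          matrix_vector_mul_assoc[symmetric])
    then have "0 = cinner u (S1 *v (D *v u)) + cinner (D *v u) (S2 *v u)"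
      using eq herm unfolding herm_def by (metis cinner_add_right cinner_zero_right diff_self)
    then have "of_real \<mu> * (cinner u (S1 *v u) + cinner u (S2 *v u)) = 0"
      unfolding D_u by (simp add: vector_scalar_commute cinner_simps algebra_simps)
    then have "\<mu> = 0 \<or> Re (cinner u (S1 *v u)) + Re (cinner u (S2 *v u)) = 0"
      by (metis mult_eq_0_iff of_real_eq_0_iff plus_complex.sel(1) zero_complex.sel(1))
    moreover have "Re (cinner u (S1 *v u)) \<ge> 0" "Re (cinner u (S2 *v u)) \<ge> 0"
      using pos unfolding pos_op_def by blast+
    ultimately have "\<mu> = 0 \<or> S1 *v u = 0 \<and> S2 *v u = 0"
      using pos pos_op_form_eq_zero by (metis add_nonneg_eq_0_iff)
    then show ?thesis using D_u unfolding D_def by (auto simp: matrix_vector_mult_diff_rdistrib)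
  qed
  then have "D = 0" by (rule matrix_eq_on_onb[OF B(1)])
  then show ?thesis unfolding D_def by simp
qed

lemma psqrt_eq:
  assumes "pos_op S" "S ** S = A"
  shows "psqrt A = S"
  unfolding psqrt_def
proof (rule the_equality)
  show "pos_op S \<and> S ** S = A" using assms by simp
  show "S' = S" if "pos_op S' \<and> S' ** S' = A" for S'
    using that assms by (auto intro!: pos_op_sqrt_unique[of S' S])
qed

lemma
  fixes A :: "complex^'n^'n"
  assumes "pos_op A"
  shows pos_op_psqrt: "pos_op (psqrt A)"
    and psqrt_square: "psqrt A ** psqrt A = A"
    and psqrt_preserves_invariant_subspace:
      "vec.subspace V \<Longrightarrow> (\<And>x. x \<in> V \<Longrightarrow> A *v x \<in> V) \<Longrightarrow> x \<in> V \<Longrightarrow> psqrt A *v x \<in> V"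
proof -
  obtain S where S: "pos_op S" "S ** S = A"
    and S_eigen: "\<And>w \<nu>. A *v w = of_real \<nu> *s w \<Longrightarrow> S *v w = of_real (sqrt \<nu>) *s w"
    using pos_op_sqrt_exists[OF assms] by blast
  then have "psqrt A = S" by (intro psqrt_eq)
  then show "pos_op (psqrt A)" "psqrt A ** psqrt A = A"
    "vec.subspace V \<Longrightarrow> (\<And>x. x \<in> V \<Longrightarrow> A *v x \<in> V) \<Longrightarrow> x \<in> V \<Longrightarrow> psqrt A *v x \<in> V"
    using S sqrt_preserves_invariant_subspace[OF pos_op_herm[OF assms] S_eigen] by auto
qed

subsection \<open>Reducing subspaces\<close>

lemma orth_subspace: "vec.subspace (orth M)"
  unfolding vec.subspace_def orth_def by (auto simp: cinner_simps)

lemma subset_orth_singleton_iff: "K \<subseteq> orth {e} \<longleftrightarrow> e \<in> orth K"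
  unfolding orth_def by (auto simp: cinner_eq_zero_commute)

lemma orth_span: "orth (vec.span U) = orth U"
proof
  show "orth (vec.span U) \<subseteq> orth U" unfolding orth_def using vec.span_superset by blast
  show "orth U \<subseteq> orth (vec.span U)"
  proof
    fix y assume y: "y \<in> orth U"
    have "vec.subspace {x. cinner x y = 0}"
      unfolding vec.subspace_def by (auto simp: cinner_simps)
    moreover have "U \<subseteq> {x. cinner x y = 0}" using y unfolding orth_def by auto
    ultimately have "vec.span U \<subseteq> {x. cinner x y = 0}" by (rule vec.span_minimal[rotated])
    then show "y \<in> orth (vec.span U)" unfolding orth_def by auto
  qed
qed

lemma matrix_span_invariant:
  assumes "\<And>x. x \<in> U \<Longrightarrow> A *v x \<in> vec.span U" and "x \<in> vec.span U"
  shows "A *v x \<in> vec.span U"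
proof -
  have "A *v x \<in> vec.span ((*v) A ` U)" using assms(2) by (simp add: vec.span_image)
  also have "\<dots> \<subseteq> vec.span U" using assms(1) by (intro vec.span_minimal) auto
  finally show ?thesis .
qed

lemma max_reducing_spec:
  fixes T :: "complex^'n^'n"
  assumes S: "vec.subspace S"
  shows "reduces T (max_reducing T S)" "max_reducing T S \<subseteq> S"
    "\<And>M. reduces T M \<Longrightarrow> M \<subseteq> S \<Longrightarrow> M \<subseteq> max_reducing T S"
proof -
  define U where "U = \<Union>{M. reduces T M \<and> M \<subseteq> S}"
  define K where "K = vec.span U"
  have K_sub: "K \<subseteq> S" unfolding K_def U_def by (rule vec.span_minimal[OF _ S]) auto
  have K_max: "M \<subseteq> K" if "reduces T M" "M \<subseteq> S" for M
    using that vec.span_superset[of U] unfolding K_def U_def by blast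
  have K_inv: "T *v x \<in> vec.span U" if "x \<in> vec.span U" for x
  proof (rule matrix_span_invariant[OF _ that])
    fix x assume "x \<in> U"
    then obtain M where "reduces T M" "M \<subseteq> S" "x \<in> M" unfolding U_def by blast
    then show "T *v x \<in> vec.span U"
      using vec.span_superset[of U] unfolding U_def reduces_def by blast
  qed
  have K_orth_inv: "T *v y \<in> orth K" if y: "y \<in> orth K" for y
  proof -
    have "T *v y \<in> orth M" if "reduces T M" "M \<subseteq> S" for M
      using y K_max[OF that] that(1) unfolding reduces_def orth_def by blast
    then have "T *v y \<in> orth U" unfolding U_def orth_def by blast
    then show ?thesis unfolding K_def orth_span .
  qed
  have K_red: "reduces T K"
    unfolding reduces_def using K_inv K_orth_inv by (auto simp: K_def)
  have "max_reducing T S = K"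
    unfolding max_reducing_def by (rule the_equality) (use K_red K_sub K_max in blast)+
  then show "reduces T (max_reducing T S)" "max_reducing T S \<subseteq> S"
    "\<And>M. reduces T M \<Longrightarrow> M \<subseteq> S \<Longrightarrow> M \<subseteq> max_reducing T S"
    using K_red K_sub K_max by auto
qed

subsection \<open>Monotone sequences of positive operators\<close>

lemma cinner_polarization:
  fixes A :: "complex^'n^'n"
  defines "Q \<equiv> \<lambda>z. cinner z (A *v z)"
  shows "cinner x (A *v y) = (Q (x + y) - Q (x - y) - \<i> * (Q (x + \<i> *s y) - Q (x - \<i> *s y))) / 4"
  unfolding Q_def
  by (simp add: matrix_vector_right_distrib matrix_vector_mult_diff_distrib vector_scalar_commute
      cinner_simps algebra_simps)

lemma matrix_entry_cinner: "(A :: complex^'n^'n) $ i $ j = cinner (axis i 1) (A *v axis j 1)"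
proof -
  have "(A *v axis j 1) $ i = (\<Sum>k\<in>UNIV. if k = j then A $ i $ k else 0)"
    unfolding matrix_vector_mult_def vec_lambda_beta by (intro sum.cong) (auto simp: axis_def)
  then show ?thesis by (simp add: cinner_axis_left)
qed

lemma decreasing_pos_op_convergent:
  fixes T :: "nat \<Rightarrow> complex^'n^'n"
  assumes pos: "\<And>n. pos_op (T n)"
    and dec: "\<And>n x. Re (cinner x (T (Suc n) *v x)) \<le> Re (cinner x (T n *v x))"
  shows "convergent T"
proof -
  have "\<exists>l. (\<lambda>n. cinner z (T n *v z)) \<longlonglongrightarrow> l" for z
  proof -
    have "decseq (\<lambda>n. Re (cinner z (T n *v z)))" unfolding decseq_Suc_iff using dec by blast
    moreover have "\<forall>n. 0 \<le> Re (cinner z (T n *v z))" using pos unfolding pos_op_def by blast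
    ultimately obtain L where "(\<lambda>n. Re (cinner z (T n *v z))) \<longlonglongrightarrow> L"
      by (rule decseq_convergent)
    then have "(\<lambda>n. of_real (Re (cinner z (T n *v z)))) \<longlonglongrightarrow> (of_real L :: complex)"
      by (rule tendsto_of_real)
    moreover have "of_real (Re (cinner z (T n *v z))) = cinner z (T n *v z)" for n
      using pos[of n] unfolding pos_op_def by (simp add: complex_eq_iff)
    ultimately show ?thesis by auto
  qed
  then obtain Q where Q: "\<And>z. (\<lambda>n. cinner z (T n *v z)) \<longlonglongrightarrow> Q z" by metis
  have "(\<lambda>n. T n $ i $ j) \<longlonglongrightarrow> (Q (x + y) - Q (x - y) - \<i> * (Q (x + \<i> *s y) - Q (x - \<i> *s y))) / 4"
    if "x = axis i 1" "y = axis j 1" for i j x y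
    unfolding matrix_entry_cinner that by (subst cinner_polarization) (intro tendsto_intros Q, simp)
  then have "\<exists>l. (\<lambda>n. T n $ i $ j) \<longlonglongrightarrow> l" for i j by blast
  then obtain L where "\<And>i j. (\<lambda>n. T n $ i $ j) \<longlonglongrightarrow> L i j" by metis
  then have "(\<lambda>n. \<chi> i j. T n $ i $ j) \<longlonglongrightarrow> (\<chi> i j. L i j)"
    by (intro tendsto_vec_lambda)
  then show ?thesis unfolding convergent_def by (auto simp: vec_lambda_eta)
qed

subsection \<open>Two-dimensional subspaces\<close>

lemma orthogonal_nonzero_independent:
  assumes "finite S" "0 \<notin> S" "\<And>u v. u \<in> S \<Longrightarrow> v \<in> S \<Longrightarrow> u \<noteq> v \<Longrightarrow> cinner u v = 0"
  shows "vec.independent S"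
proof
  assume "vec.dependent S"
  then obtain c v0 where v0: "v0 \<in> S" "c v0 \<noteq> 0" and dep: "(\<Sum>v\<in>S. c v *s v) = 0"
    using vec.dependent_finite[OF assms(1)] by blast
  have "0 = cinner v0 (\<Sum>v\<in>S. c v *s v)" using dep by simp
  also have "\<dots> = (\<Sum>v\<in>S. c v * cinner v0 v)" by (simp add: cinner_sum_right cinner_scale_right)
  also have "\<dots> = c v0 * cinner v0 v0 + (\<Sum>v\<in>S - {v0}. c v * cinner v0 v)"
    using assms(1) v0(1) by (simp add: sum.remove)
  also have "(\<Sum>v\<in>S - {v0}. c v * cinner v0 v) = 0"
    using assms(3) v0(1) by (intro sum.neutral) auto
  finally show False using v0 assms(2) by auto
qed

lemma dim2_orthonormal_expand:
  assumes W: "vec.subspace W" "vec.dim W = 2" and ef: "e \<in> W" "f \<in> W"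
    and orthonormal: "cinner e e = 1" "cinner f f = 1" "cinner e f = 0"
    and y: "y \<in> W"
  shows "y = cinner e y *s e + cinner f y *s f"
proof (rule ccontr)
  \<comment> \<open>otherwise the remainder is a third orthogonal direction in W\<close>
  define w where "w = y - cinner e y *s e - cinner f y *s f"
  have fe: "cinner f e = 0" using orthonormal(3) cinner_eq_zero_commute by blast
  assume "y \<noteq> cinner e y *s e + cinner f y *s f"
  then have "w \<noteq> 0" unfolding w_def by (simp add: algebra_simps)
  moreover have "w \<in> W"
    unfolding w_def using y ef W(1) by (simp add: vec.subspace_diff vec.subspace_scale)
  moreover have "cinner e w = 0" "cinner f w = 0"
    unfolding w_def by (simp_all add: cinner_simps orthonormal fe)
  ultimately have w: "w \<in> W" "w \<noteq> 0" "cinner e w = 0" "cinner f w = 0" by blast+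
  have we: "cinner w e = 0" and wf: "cinner w f = 0"
    using w(3,4) cinner_eq_zero_commute by blast+
  have distinct: "e \<noteq> f" "e \<noteq> w" "f \<noteq> w"
    using orthonormal w(3,4) by auto
  have "vec.independent {e, f, w}"
    by (rule orthogonal_nonzero_independent) (use distinct orthonormal fe w we wf in auto)
  then have "card {e, f, w} \<le> vec.dim W"
    by (rule vec.independent_card_le_dim[rotated]) (use ef w in auto)
  then show False using distinct W(2) by simp
qed

lemma dim2_orthonormal_completion:
  assumes W: "vec.subspace W" "vec.dim W = 2" and e: "e \<in> W" "norm e = 1"
  shows "\<exists>f\<in>W. norm f = 1 \<and> cinner e f = 0 \<and> (\<forall>y\<in>W. y = cinner e y *s e + cinner f y *s f)"
proof -
  have ee: "cinner e e = 1" using e by (simp add: cinner_unit)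
  obtain g where g: "g \<in> W" "g \<notin> vec.span {e}"
  proof -
    obtain B where B: "B \<subseteq> W" "vec.independent B" "W \<subseteq> vec.span B" "card B = vec.dim W"
      by (rule vec.basis_exists)
    have "\<not> B \<subseteq> vec.span {e}"
      using vec.independent_span_bound[of "{e}" B] B(2,4) W(2) by auto
    then show ?thesis using B(1) that by blast
  qed
  define f0 where "f0 = g - cinner e g *s e"
  have "g \<noteq> cinner e g *s e"
    using g(2) by (metis vec.span_base vec.span_scale singletonI)
  then have f0: "f0 \<in> W" "f0 \<noteq> 0" "cinner e f0 = 0"
    unfolding f0_def using g e W(1)
    by (simp_all add: vec.subspace_diff vec.subspace_scale cinner_simps ee)
  define f where "f = (1 / norm f0) *\<^sub>R f0"
  have "f \<in> W"
    unfolding f_def using f0 W(1) by (simp add: scaleR_eq_of_real_smult vec.subspace_scale)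
  moreover have "norm f = 1" "cinner e f = 0"
    unfolding f_def using f0 by (simp_all add: cinner_scaleR_right)
  ultimately show ?thesis
    using dim2_orthonormal_expand[OF W e(1) _ ee] by (metis cinner_unit)
qed

subsection \<open>A two-by-two recursion\<close>

text \<open>In an orthonormal basis e, f of a two-dimensional subspace reducing all T n, the matrix of
  T n is [a n, b n; cnj (b n), d n] and that of its square root is [p n, r n; cnj (r n), m n];
  form n \<alpha> below is the quadratic form of T n at \<alpha> e + f.\<close>

locale two_by_two_iteration =
  fixes \<tau> :: real and a d p m :: "nat \<Rightarrow> real" and b r :: "nat \<Rightarrow> complex"
  assumes tau_pos: "0 < \<tau>" and tau_less_1: "\<tau> < 1"
    and a_sqrt: "\<And>n. a n = (p n)^2 + (cmod (r n))^2"
    and d_sqrt: "\<And>n. d n = (cmod (r n))^2 + (m n)^2"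
    and b_sqrt: "\<And>n. b n = r n * of_real (p n + m n)"
    and p_nonneg: "\<And>n. p n \<ge> 0" and m_nonneg: "\<And>n. m n \<ge> 0"
    and r_bound: "\<And>n. (cmod (r n))^2 \<le> p n * m n"
    and a_Suc: "\<And>n. a (Suc n) = a n - \<tau> * (p n)^2"
    and b_Suc: "\<And>n. b (Suc n) = b n - of_real (\<tau> * p n) * r n"
    and d_Suc: "\<And>n. d (Suc n) = d n - \<tau> * (cmod (r n))^2"
begin

definition det :: "nat \<Rightarrow> real" where
  "det n = a n * d n - (cmod (b n))^2"

definition form :: "nat \<Rightarrow> complex \<Rightarrow> real" where
  "form n \<alpha> = a n * (cmod \<alpha>)^2 + 2 * Re (cnj \<alpha> * b n) + d n"

lemma a_nonneg: "a n \<ge> 0" and d_nonneg: "d n \<ge> 0"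
  by (simp_all add: a_sqrt d_sqrt)

lemma norm_b_sq: "(cmod (b n))^2 = (cmod (r n))^2 * (p n + m n)^2"
  by (simp add: b_sqrt norm_mult power_mult_distrib del: of_real_add)

lemma b_Suc_sqrt: "b (Suc n) = r n * of_real (p n + m n - \<tau> * p n)"
  unfolding b_Suc[of n] b_sqrt[of n] by (simp add: algebra_simps)

lemma norm_b_Suc_sq: "(cmod (b (Suc n)))^2 = (cmod (r n))^2 * (p n + m n - \<tau> * p n)^2"
  by (simp add: b_Suc_sqrt norm_mult power_mult_distrib del: of_real_add of_real_diff)

lemma det_sqrt: "det n = (p n * m n - (cmod (r n))^2)^2"
  unfolding det_def norm_b_sq a_sqrt d_sqrt by (simp add: power2_eq_square algebra_simps)

lemma norm_b_sq_le: "(cmod (b n))^2 \<le> a n * d n"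
  using det_sqrt[of n] unfolding det_def by (metis diff_ge_0_iff_ge zero_le_power2)

lemma det_Suc: "det (Suc n) = (1 - \<tau>) * det n"
  unfolding det_def norm_b_Suc_sq[of n] a_Suc[of n] d_Suc[of n] norm_b_sq[of n] a_sqrt[of n] d_sqrt[of n]
  by (simp add: power2_eq_square algebra_simps)

lemma det_pos:
  assumes "det 0 > 0" shows "det n > 0"
proof -
  have "det n = (1 - \<tau>)^n * det 0" by (induction n) (simp_all add: det_Suc)
  then show ?thesis using assms tau_less_1 by simp
qed

lemma a_pos:
  assumes "det 0 > 0" shows "a n > 0"
  using det_pos[OF assms, of n] a_nonneg[of n] unfolding det_def
  by (metis diff_gt_0_iff_gt mult_zero_left order_le_less zero_le_power2 not_le)

lemma a_tendsto_zero: "a \<longlonglongrightarrow> 0"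
proof -
  have trace: "a n + d n + \<tau> * (\<Sum>k<n. a k) = a 0 + d 0" for n
  proof (induction n)
    case (Suc n)
    then show ?case by (simp add: a_Suc d_Suc a_sqrt[of n] algebra_simps)
  qed simp
  have "summable a"
  proof (rule summableI_nonneg_bounded)
    show "(\<Sum>k<n. a k) \<le> (a 0 + d 0) / \<tau>" for n
      using trace[of n] a_nonneg[of n] d_nonneg[of n] tau_pos by (simp add: field_simps)
  qed (rule a_nonneg)
  then show ?thesis by (rule summable_LIMSEQ_zero)
qed

lemma decseq_d: "decseq d"
  unfolding decseq_Suc_iff using tau_pos by (simp add: d_Suc)

lemma b_tendsto_zero: "b \<longlonglongrightarrow> 0"
proof -
  have "(\<lambda>n. (cmod (b n))^2) \<longlonglongrightarrow> 0"
  proof (rule tendsto_sandwich[of "\<lambda>n. 0" _ _ "\<lambda>n. a n * d 0"])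
    have "(cmod (b n))^2 \<le> a n * d 0" for n
      using norm_b_sq_le[of n] mult_left_mono[OF decseqD[OF decseq_d, of 0 n] a_nonneg[of n]] by simp
    then show "\<forall>\<^sub>F n in sequentially. (cmod (b n))^2 \<le> a n * d 0" by simp
    show "(\<lambda>n. a n * d 0) \<longlonglongrightarrow> 0" using tendsto_mult_left_zero[OF a_tendsto_zero] .
  qed auto
  then have "(\<lambda>n. sqrt ((cmod (b n))^2)) \<longlonglongrightarrow> sqrt 0" by (rule tendsto_real_sqrt)
  then show ?thesis by (simp add: tendsto_norm_zero_iff)
qed

lemma form_Suc_le: "form (Suc n) \<alpha> \<le> form n \<alpha>"
proof -
  have "(cmod (of_real (p n) * \<alpha> + r n))^2
      = (p n)^2 * (cmod \<alpha>)^2 + 2 * p n * Re (cnj \<alpha> * r n) + (cmod (r n))^2"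
    unfolding cmod_power2 by (simp add: power2_eq_square algebra_simps)
  then have "form n \<alpha> - form (Suc n) \<alpha> = \<tau> * (cmod (of_real (p n) * \<alpha> + r n))^2"
    unfolding form_def a_Suc b_Suc d_Suc by (simp add: algebra_simps)
  then show ?thesis using tau_pos by (smt (verit) mult_nonneg_nonneg zero_le_power2)
qed

lemma form_antimono: "n \<le> k \<Longrightarrow> form k \<alpha> \<le> form n \<alpha>"
proof (induction k rule: dec_induct)
  case (step k)
  then show ?case using form_Suc_le[of k \<alpha>] by linarith
qed simp

lemma det_ge_lower_bound_d:
  assumes lower: "\<And>k. l \<le> d k" and a: "a n > 0"
  shows "l * a n \<le> det n"
proof -
  \<comment> \<open>at its minimiser \<alpha> the form is det n / a n, while far out in time it is at least l\<close>
  define \<alpha> where "\<alpha> = - b n / of_real (a n)"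
  have "cnj \<alpha> * b n = of_real (-((cmod (b n))^2) / a n)"
    unfolding \<alpha>_def by (simp add: cnj_mult_self)
  then have "Re (cnj \<alpha> * b n) = -((cmod (b n))^2) / a n"
    by (metis Re_complex_of_real)
  moreover have "(cmod \<alpha>)^2 = (cmod (b n))^2 / (a n)^2"
    unfolding \<alpha>_def using a by (simp add: norm_divide power_divide)
  ultimately have form_\<alpha>: "form n \<alpha> = det n / a n"
    unfolding form_def det_def using a by (simp add: field_simps power2_eq_square)
  have "l \<le> form n \<alpha>"
  proof (rule LIMSEQ_le_const2)
    show "(\<lambda>k. l - 2 * cmod \<alpha> * cmod (b k)) \<longlonglongrightarrow> l"
      using b_tendsto_zero by (auto intro!: tendsto_eq_intros)
    have "l - 2 * cmod \<alpha> * cmod (b k) \<le> form k \<alpha>" for k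
    proof -
      have "- (cmod \<alpha> * cmod (b k)) \<le> Re (cnj \<alpha> * b k)"
        using abs_Re_le_cmod[of "cnj \<alpha> * b k"] by (simp add: norm_mult)
      moreover have "0 \<le> a k * (cmod \<alpha>)^2" using a_nonneg[of k] by simp
      ultimately show ?thesis unfolding form_def using lower[of k] by linarith
    qed
    then show "\<exists>N. \<forall>k\<ge>N. l - 2 * cmod \<alpha> * cmod (b k) \<le> form n \<alpha>"
      using form_antimono[of n _ \<alpha>] order_trans by blast
  qed
  then show ?thesis using a unfolding form_\<alpha> by (simp add: field_simps)
qed

lemma norm_b_Suc_sq_ge:
  assumes "16 * a n \<le> d n"
  shows "(1 - \<tau> / 2) * (cmod (b n))^2 \<le> (cmod (b (Suc n)))^2"
proof -
  have "a n + d n \<le> (p n + m n)^2"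
    using r_bound[of n] unfolding a_sqrt d_sqrt by (simp add: power2_eq_square algebra_simps)
  moreover have "(p n)^2 \<le> a n" by (simp add: a_sqrt)
  ultimately have "(4 * p n)^2 \<le> (p n + m n)^2"
    using assms a_nonneg[of n] by (simp add: power_mult_distrib)
  then have "4 * p n \<le> p n + m n"
    using p_nonneg[of n] m_nonneg[of n] by (meson add_nonneg_nonneg power2_le_imp_le)
  then have "\<tau> * p n \<le> \<tau> * ((p n + m n) / 4)"
    using tau_pos by (simp add: mult_left_mono)
  then have "(1 - \<tau> / 4) * (p n + m n) \<le> p n + m n - \<tau> * p n"
    by (simp add: algebra_simps)
  moreover have "0 \<le> (1 - \<tau> / 4) * (p n + m n)"
    using tau_less_1 p_nonneg[of n] m_nonneg[of n] by simp
  ultimately have "((1 - \<tau> / 4) * (p n + m n))^2 \<le> (p n + m n - \<tau> * p n)^2"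
    by (simp add: power_mono)
  moreover have "(1 - \<tau> / 2) * (p n + m n)^2 \<le> ((1 - \<tau> / 4) * (p n + m n))^2"
  proof -
    have "1 - \<tau> / 2 \<le> (1 - \<tau> / 4)^2" by (simp add: power2_eq_square field_simps)
    then show ?thesis unfolding power_mult_distrib by (rule mult_right_mono) simp
  qed
  ultimately have "(1 - \<tau> / 2) * (p n + m n)^2 \<le> (p n + m n - \<tau> * p n)^2"
    by linarith
  then have "(cmod (r n))^2 * ((1 - \<tau> / 2) * (p n + m n)^2) \<le> (cmod (r n))^2 * (p n + m n - \<tau> * p n)^2"
    by (rule mult_left_mono) simp
  then show ?thesis
    unfolding norm_b_Suc_sq norm_b_sq[of n] by (simp add: algebra_simps)
qed

lemma b_nonzero:
  assumes "det 0 > 0" "b 0 \<noteq> 0" shows "b n \<noteq> 0"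
proof (induction n)
  case (Suc n)
  have "p n \<noteq> 0"
  proof
    assume "p n = 0"
    then have "r n = 0" using r_bound[of n] by simp
    then show False using a_pos[OF assms(1), of n] \<open>p n = 0\<close> by (simp add: a_sqrt)
  qed
  then have "(1 - \<tau>) * p n + m n > 0"
    using tau_less_1 p_nonneg[of n] m_nonneg[of n] by (simp add: add_pos_nonneg)
  then have "p n + m n - \<tau> * p n \<noteq> 0" by (simp add: algebra_simps)
  moreover have "r n \<noteq> 0" using Suc by (simp add: b_sqrt)
  ultimately show ?case unfolding b_Suc_sqrt by (metis mult_eq_0_iff of_real_eq_0_iff)
qed (use assms in simp)

definition ratio :: "nat \<Rightarrow> real" where
  "ratio n = (cmod (b n))^2 / det n"

lemma ratio_le:
  assumes det0: "det 0 > 0" and l: "l > 0" and lower: "\<And>k. l \<le> d k"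
  shows "ratio n \<le> d 0 / l"
proof -
  have "(cmod (b n))^2 * l \<le> a n * d 0 * l"
    using norm_b_sq_le[of n] mult_left_mono[OF decseqD[OF decseq_d, of 0 n] a_nonneg[of n]] l
    by (simp add: mult_right_mono)
  also have "\<dots> \<le> det n * d 0"
    using mult_right_mono[OF det_ge_lower_bound_d[OF lower a_pos[OF det0]] d_nonneg[of 0]]
    by (simp add: algebra_simps)
  finally show ?thesis
    unfolding ratio_def using det_pos[OF det0, of n] l by (simp add: field_simps)
qed

lemma ratio_Suc_ge:
  assumes det0: "det 0 > 0" and "16 * a n \<le> d n"
  shows "(1 - \<tau> / 2) / (1 - \<tau>) * ratio n \<le> ratio (Suc n)"
proof -
  have "(1 - \<tau> / 2) * (cmod (b n))^2 \<le> (cmod (b (Suc n)))^2"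
    using assms(2) by (rule norm_b_Suc_sq_ge)
  moreover have "0 \<le> (1 - \<tau>) * det n"
    using det_pos[OF det0, of n] tau_less_1 by simp
  ultimately have "(1 - \<tau> / 2) * (cmod (b n))^2 / ((1 - \<tau>) * det n) \<le> ratio (Suc n)"
    unfolding ratio_def det_Suc by (rule divide_right_mono)
  then show ?thesis unfolding ratio_def by simp
qed

lemma d_tendsto_zero:
  assumes det0: "det 0 > 0" and b0: "b 0 \<noteq> 0"
  shows "d \<longlonglongrightarrow> 0"
proof -
  obtain l where d_lim: "d \<longlonglongrightarrow> l" and lower: "\<And>k. l \<le> d k"
    using decseq_convergent[OF decseq_d, of 0] d_nonneg by blast
  have "l = 0"
  proof (rule ccontr)
    \<comment> \<open>if d stays above l > 0, the ratio stays bounded but eventually grows geometrically\<close>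
    assume "l \<noteq> 0"
    moreover have "0 \<le> l" using LIMSEQ_le_const[OF d_lim, of 0] d_nonneg by blast
    ultimately have l: "l > 0" by simp
    define \<kappa> where "\<kappa> = (1 - \<tau> / 2) / (1 - \<tau>)"
    have \<kappa>: "\<kappa> > 1" unfolding \<kappa>_def using tau_pos tau_less_1 by simp
    have "\<forall>\<^sub>F n in sequentially. a n < l / 16"
      using order_tendstoD(2)[OF a_tendsto_zero, of "l / 16"] l by simp
    then obtain N where "\<And>n. n \<ge> N \<Longrightarrow> a n < l / 16"
      unfolding eventually_sequentially by blast
    then have N: "16 * a n \<le> d n" if "n \<ge> N" for n
      using that lower[of n] by fastforce
    have growth: "\<kappa>^k * ratio N \<le> ratio (N + k)" for k
    proof (induction k)
      case (Suc k)
      then have "\<kappa>^(Suc k) * ratio N \<le> \<kappa> * ratio (N + k)" using \<kappa> by simp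
      also have "\<dots> \<le> ratio (N + Suc k)"
        using ratio_Suc_ge[OF det0 N[of "N + k"]] unfolding \<kappa>_def by simp
      finally show ?case .
    qed simp
    have "ratio N > 0"
      unfolding ratio_def using det_pos[OF det0, of N] b_nonzero[OF det0 b0, of N] by simp
    obtain k where "d 0 / l / ratio N < \<kappa>^k"
      using real_arch_pow[OF \<kappa>] by blast
    then have "d 0 / l < \<kappa>^k * ratio N"
      using pos_divide_less_eq[OF \<open>ratio N > 0\<close>] by blast
    also have "\<dots> \<le> d 0 / l"
      using growth[of k] ratio_le[OF det0 l lower, of "N + k"] by linarith
    finally show False by simp
  qed
  then show ?thesis using d_lim by simp
qed

end

lemma tendsto_matrix_vector_mult: "T \<longlonglongrightarrow> L \<Longrightarrow> (\<lambda>n. T n *v x) \<longlonglongrightarrow> L *v (x::complex^'n)"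
  unfolding matrix_vector_mult_def by (intro tendsto_intros)

lemma tendsto_scalar_mult_zero: "c \<longlonglongrightarrow> 0 \<Longrightarrow> (\<lambda>n. c n *s v) \<longlonglongrightarrow> (0::complex^'n)"
  by (rule vec_tendstoI) (auto simp: vector_scalar_mult_def intro: tendsto_mult_left_zero)

subsection \<open>The iteration\<close>

locale rank_one_iteration =
  fixes e :: "complex^'n" and \<tau> :: real and T :: "nat \<Rightarrow> complex^'n^'n"
  assumes norm_e: "norm e = 1" and tau_pos: "0 < \<tau>" and tau_less_1: "\<tau> < 1"
    and pos_op_T0: "pos_op (T 0)"
    and T_Suc: "\<And>n. T (Suc n) = psqrt (T n) ** (mat 1 - \<tau> *\<^sub>R ketbra e e) ** psqrt (T n)"
begin

abbreviation R :: "nat \<Rightarrow> complex^'n^'n" where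
  "R n \<equiv> psqrt (T n)"

lemma pos_op_T: "pos_op (T n)"
proof (induction n)
  case (Suc n)
  have "herm (R n)" using Suc by (intro pos_op_herm pos_op_psqrt)
  moreover have "pos_op (mat 1 - \<tau> *\<^sub>R ketbra e e)"
    using norm_e tau_pos tau_less_1 by (intro pos_op_id_minus_rank_one) auto
  ultimately show ?case unfolding T_Suc by (rule pos_op_sandwich)
qed (rule pos_op_T0)

lemma pos_op_R: "pos_op (R n)"
  by (rule pos_op_psqrt[OF pos_op_T])

lemma herm_R: "herm (R n)"
  by (rule pos_op_herm[OF pos_op_R])

lemma R_R_apply: "R n *v (R n *v x) = T n *v x"
  by (simp add: matrix_vector_mul_assoc psqrt_square[OF pos_op_T])

lemma T_Suc_apply: "T (Suc n) *v x = T n *v x - (of_real \<tau> * cinner e (R n *v x)) *s (R n *v e)"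
  unfolding T_Suc matrix_vector_mul_assoc[symmetric] R_R_apply[symmetric]
  by (simp add: matrix_vector_mult_diff_rdistrib matrix_vector_mult_diff_distrib scaleR_matrix_vector_mult
      ketbra_apply scaleR_eq_of_real_smult vector_scalar_commute vector_smult_assoc)

lemma form_T_Suc:
  "cinner x (T (Suc n) *v x) = cinner x (T n *v x) - of_real (\<tau> * (cmod (cinner e (R n *v x)))^2)"
proof -
  have "cinner x (R n *v e) = cnj (cinner e (R n *v x))"
    using herm_R[of n] unfolding herm_def by (metis cinner_commute)
  then show ?thesis
    unfolding T_Suc_apply by (simp add: cinner_simps complex_norm_square[unfolded of_real_power])
qed

lemma convergent_T: "convergent T"
  by (rule decreasing_pos_op_convergent[OF pos_op_T]) (simp add: form_T_Suc tau_pos less_imp_le)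

lemma T_reducing_invariants:
  assumes K: "reduces (T 0) K" "K \<subseteq> orth {e}"
  shows "(\<forall>x\<in>K. T n *v x = T 0 *v x) \<and> (\<forall>y\<in>orth K. T n *v y \<in> orth K)"
proof (induction n)
  case (Suc n)
  have K_sub: "vec.subspace K" using K(1) unfolding reduces_def by blast
  have "T n *v x \<in> K" if "x \<in> K" for x
    using Suc that K(1) unfolding reduces_def by auto
  then have R_K: "R n *v x \<in> K" if "x \<in> K" for x
    using that by (intro psqrt_preserves_invariant_subspace[OF pos_op_T K_sub])
  have R_orth_K: "R n *v y \<in> orth K" if "y \<in> orth K" for y
    using that Suc by (intro psqrt_preserves_invariant_subspace[OF pos_op_T orth_subspace]) auto
  have e_orth_K: "e \<in> orth K"
    using K(2) subset_orth_singleton_iff by blast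
  have "T (Suc n) *v x = T 0 *v x" if "x \<in> K" for x
  proof -
    have "cinner e (R n *v x) = 0"
      using R_K[OF that] K(2) unfolding orth_def by (auto simp: cinner_eq_zero_commute)
    then show ?thesis using Suc that unfolding T_Suc_apply by simp
  qed
  moreover have "T (Suc n) *v y \<in> orth K" if "y \<in> orth K" for y
    unfolding T_Suc_apply using Suc that R_orth_K[OF e_orth_K]
    by (intro vec.subspace_diff vec.subspace_scale orth_subspace) auto
  ultimately show ?case by blast
qed (use K in \<open>auto simp: reduces_def\<close>)

end

subsection \<open>The iteration on a two-dimensional reducing subspace\<close>

locale rank_one_iteration_dim2 = rank_one_iteration e \<tau> T
  for e :: "complex^'n" and \<tau> T +
  fixes K :: "(complex^'n) set" and f :: "complex^'n"
  assumes reduces_K: "reduces (T 0) K" and K_orth_e: "K \<subseteq> orth {e}"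
    and f_orth_K: "f \<in> orth K" and norm_f: "norm f = 1" and cinner_e_f: "cinner e f = 0"
    and orth_K_expand: "\<And>y. y \<in> orth K \<Longrightarrow> y = cinner e y *s e + cinner f y *s f"
begin

lemma e_orth_K: "e \<in> orth K"
  using K_orth_e subset_orth_singleton_iff by blast

lemma T_on_K: "x \<in> K \<Longrightarrow> T n *v x = T 0 *v x"
  using T_reducing_invariants[OF reduces_K K_orth_e] by blast

lemma T_orth_K: "y \<in> orth K \<Longrightarrow> T n *v y \<in> orth K"
  using T_reducing_invariants[OF reduces_K K_orth_e] by blast

lemma R_orth_K: "y \<in> orth K \<Longrightarrow> R n *v y \<in> orth K"
  using T_orth_K by (intro psqrt_preserves_invariant_subspace[OF pos_op_T orth_subspace]) auto

definition T_ee :: "nat \<Rightarrow> real" where "T_ee n = Re (cinner e (T n *v e))"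
definition T_ef :: "nat \<Rightarrow> complex" where "T_ef n = cinner e (T n *v f)"
definition T_ff :: "nat \<Rightarrow> real" where "T_ff n = Re (cinner f (T n *v f))"
definition R_ee :: "nat \<Rightarrow> real" where "R_ee n = Re (cinner e (R n *v e))"
definition R_ef :: "nat \<Rightarrow> complex" where "R_ef n = cinner e (R n *v f)"
definition R_ff :: "nat \<Rightarrow> real" where "R_ff n = Re (cinner f (R n *v f))"

lemma cinner_e_e: "cinner e e = 1" and cinner_f_f: "cinner f f = 1" and cinner_f_e: "cinner f e = 0"
  using norm_e norm_f cinner_e_f by (simp_all add: cinner_unit cinner_eq_zero_commute)

lemma cinner_basis:
  "cinner (\<alpha> *s e + \<beta> *s f) (\<gamma> *s e + \<delta> *s f) = cnj \<alpha> * \<gamma> + cnj \<beta> * \<delta>"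
  by (simp add: cinner_simps cinner_e_e cinner_f_f cinner_e_f cinner_f_e)

lemma herm_apply_expand:
  assumes "herm A" "\<And>y. y \<in> orth K \<Longrightarrow> A *v y \<in> orth K"
  shows "A *v e = of_real (Re (cinner e (A *v e))) *s e + cnj (cinner e (A *v f)) *s f"
    and "A *v f = cinner e (A *v f) *s e + of_real (Re (cinner f (A *v f))) *s f"
proof -
  have "cinner f (A *v e) = cnj (cinner e (A *v f))"
    using assms(1) unfolding herm_def by (metis cinner_commute)
  then show "A *v e = of_real (Re (cinner e (A *v e))) *s e + cnj (cinner e (A *v f)) *s f"
    using orth_K_expand[OF assms(2)[OF e_orth_K]] herm_cinner_real[OF assms(1)] by metis
  show "A *v f = cinner e (A *v f) *s e + of_real (Re (cinner f (A *v f))) *s f"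
    using orth_K_expand[OF assms(2)[OF f_orth_K]] herm_cinner_real[OF assms(1)] by metis
qed

lemma T_e: "T n *v e = of_real (T_ee n) *s e + cnj (T_ef n) *s f"
  unfolding T_ee_def T_ef_def by (intro herm_apply_expand(1) pos_op_herm pos_op_T T_orth_K)

lemma T_f: "T n *v f = T_ef n *s e + of_real (T_ff n) *s f"
  unfolding T_ef_def T_ff_def by (intro herm_apply_expand(2) pos_op_herm pos_op_T T_orth_K)

lemma R_e: "R n *v e = of_real (R_ee n) *s e + cnj (R_ef n) *s f"
  unfolding R_ee_def R_ef_def by (intro herm_apply_expand(1) herm_R R_orth_K)

lemma R_f: "R n *v f = R_ef n *s e + of_real (R_ff n) *s f"
  unfolding R_ef_def R_ff_def by (intro herm_apply_expand(2) herm_R R_orth_K)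

lemma cinner_T_as_R: "cinner x (T n *v y) = cinner (R n *v x) (R n *v y)"
  using herm_R[of n] unfolding herm_def R_R_apply[symmetric] by metis

sublocale two_by_two_iteration \<tau> T_ee T_ff R_ee R_ff T_ef R_ef
proof
  fix n
  have "T_ee n = Re (cinner (R n *v e) (R n *v e))"
    unfolding T_ee_def cinner_T_as_R ..
  also have "cinner (R n *v e) (R n *v e) = of_real ((R_ee n)^2 + (cmod (R_ef n))^2)"
    unfolding R_e cinner_basis complex_cnj_cnj complex_norm_square[symmetric]
    by (simp add: power2_eq_square)
  finally show "T_ee n = (R_ee n)^2 + (cmod (R_ef n))^2" by simp
  show "T_ff n = (cmod (R_ef n))^2 + (R_ff n)^2"
    using cinner_T_as_R[of f n f] unfolding T_ff_def R_f cinner_basis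
    by (simp add: cnj_mult_self power2_eq_square)
  show "T_ef n = R_ef n * of_real (R_ee n + R_ff n)"
    unfolding T_ef_def cinner_T_as_R R_e R_f cinner_basis by (simp add: algebra_simps)
  show "R_ee n \<ge> 0" "R_ff n \<ge> 0"
    unfolding R_ee_def R_ff_def using pos_op_R unfolding pos_op_def by blast+
  show "(cmod (R_ef n))^2 \<le> R_ee n * R_ff n"
    unfolding R_ef_def R_ee_def R_ff_def by (rule pos_op_cauchy_schwarz[OF pos_op_R])
  show "T_ee (Suc n) = T_ee n - \<tau> * (R_ee n)^2"
    unfolding T_ee_def T_Suc_apply R_e by (simp add: cinner_simps cinner_e_e cinner_e_f power2_eq_square)
  show "T_ef (Suc n) = T_ef n - of_real (\<tau> * R_ee n) * R_ef n"
    unfolding T_ef_def T_Suc_apply R_e R_ef_def[symmetric] by (simp add: cinner_simps cinner_e_e cinner_e_f)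
  show "T_ff (Suc n) = T_ff n - \<tau> * (cmod (R_ef n))^2"
    unfolding T_ff_def T_Suc_apply R_e R_ef_def[symmetric]
    by (simp add: cinner_simps cinner_f_f cinner_f_e cmod_power2[unfolded power2_eq_square] power2_eq_square
        algebra_simps)
qed (use tau_pos tau_less_1 in auto)

lemma det_0_pos:
  assumes "strictly_pos_op (T 0)"
  shows "det 0 > 0"
proof -
  \<comment> \<open>T 0 maps x to det 0 *s f, so the form of T 0 at x is T_ee 0 * det 0\<close>
  define x where "x = (- T_ef 0) *s e + of_real (T_ee 0) *s f"
  have T_ee_pos: "T_ee 0 > 0"
    using assms norm_e unfolding strictly_pos_op_def T_ee_def by (metis norm_zero zero_neq_one)
  moreover have "cinner f x = of_real (T_ee 0)"
    unfolding x_def by (simp add: cinner_simps cinner_f_f cinner_f_e)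
  ultimately have "x \<noteq> 0" by auto
  then have "Re (cinner x (T 0 *v x)) > 0"
    using assms unfolding strictly_pos_op_def by blast
  moreover have "T 0 *v x = of_real (det 0) *s f"
    unfolding x_def det_def
    by (simp add: matrix_vector_right_distrib vector_scalar_commute T_e T_f vec_eq_iff algebra_simps
        complex_norm_square[unfolded of_real_power])
  ultimately have "T_ee 0 * det 0 > 0"
    unfolding x_def by (simp add: cinner_simps cinner_f_f cinner_e_f)
  then show ?thesis using T_ee_pos by (simp add: zero_less_mult_iff)
qed

lemma T_ef_0_nonzero:
  assumes K_max: "\<And>M. reduces (T 0) M \<Longrightarrow> M \<subseteq> orth {e} \<Longrightarrow> M \<subseteq> K"
  shows "T_ef 0 \<noteq> 0"
proof
  \<comment> \<open>otherwise f is an eigenvector of T 0 and K + span {f} reduces T 0\<close>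
  assume T_ef_0: "T_ef 0 = 0"
  define N where "N = vec.span (insert f K)"
  have "T 0 *v x \<in> N" if "x \<in> N" for x
  proof (rule matrix_span_invariant[OF _ that[unfolded N_def], folded N_def])
    fix x assume "x \<in> insert f K"
    then show "T 0 *v x \<in> N"
      using T_f[of 0] T_ef_0 reduces_K vec.span_superset[of "insert f K"] unfolding N_def reduces_def
      by (auto intro: vec.span_scale)
  qed
  moreover have "T 0 *v y \<in> orth N" if "y \<in> orth N" for y
  proof -
    have "y \<in> orth K" "cinner f y = 0" using that[unfolded N_def orth_span] unfolding orth_def by auto
    then have "y = cinner e y *s e" using orth_K_expand by fastforce
    moreover have "e \<in> orth (insert f K)"
      using e_orth_K cinner_f_e unfolding orth_def by auto
    then have "e \<in> orth N" unfolding N_def orth_span .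
    ultimately show ?thesis
      using T_e[of 0] T_ef_0 orth_subspace[of N]
      by (metis vector_scalar_commute vec.subspace_scale add.right_neutral complex_cnj_zero vector_smult_lzero)
  qed
  ultimately have "reduces (T 0) N" unfolding reduces_def N_def by auto
  moreover have "insert f K \<subseteq> orth {e}"
    using K_orth_e cinner_e_f unfolding orth_def by auto
  then have "N \<subseteq> orth {e}"
    unfolding N_def by (rule vec.span_minimal[OF _ orth_subspace])
  ultimately have "f \<in> K" using K_max vec.span_base[of f "insert f K"] unfolding N_def by blast
  then show False using f_orth_K cinner_f_f unfolding orth_def by auto
qed

lemma T_tendsto_zero_on_orth_K:
  assumes "det 0 > 0" "T_ef 0 \<noteq> 0" and y: "y \<in> orth K"
  shows "(\<lambda>n. T n *v y) \<longlonglongrightarrow> 0"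
proof -
  define c where "c n = cinner e y * of_real (T_ee n) + cinner f y * T_ef n" for n
  define c' where "c' n = cinner e y * cnj (T_ef n) + cinner f y * of_real (T_ff n)" for n
  have "T n *v y = c n *s e + c' n *s f" for n
    unfolding c_def c'_def
    by (subst orth_K_expand[OF y])
      (simp add: matrix_vector_right_distrib vector_scalar_commute T_e T_f vec_eq_iff algebra_simps)
  moreover have "c \<longlonglongrightarrow> 0" "c' \<longlonglongrightarrow> 0"
    unfolding c_def c'_def using a_tendsto_zero b_tendsto_zero d_tendsto_zero[OF assms(1,2)]
    by (auto intro!: tendsto_eq_intros)
  then have "(\<lambda>n. c n *s e + c' n *s f) \<longlonglongrightarrow> 0 + 0"
    by (intro tendsto_add tendsto_scalar_mult_zero)
  ultimately show ?thesis by simp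
qed

end

theorem corollary4p2:
  fixes e :: "complex^'n" and \<tau> :: real and T0 :: "complex^'n^'n"
    and T :: "nat \<Rightarrow> complex^'n^'n" and K :: "(complex^'n) set"
  assumes "norm e = 1"
    and "0 < \<tau>" and "\<tau> < 1"
    and "strictly_pos_op T0"
    and "T 0 = T0"
    and "\<And>n. T (Suc n) = psqrt (T n) ** (mat 1 - \<tau> *\<^sub>R ketbra e e) ** psqrt (T n)"
    and "K = max_reducing T0 (orth {e})"
    and "vec.dim (orth K) = 2"
  shows "convergent T
    \<and> (\<forall>x\<in>K. lim T *v x = T0 *v x)
    \<and> (\<forall>x\<in>orth K. lim T *v x = 0)"
proof -
  interpret rank_one_iteration e \<tau> T
    using assms(1-6) unfolding strictly_pos_op_def by unfold_locales auto
  have K: "reduces (T 0) K" "K \<subseteq> orth {e}" "\<And>M. reduces (T 0) M \<Longrightarrow> M \<subseteq> orth {e} \<Longrightarrow> M \<subseteq> K"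
    using max_reducing_spec[OF orth_subspace[of "{e}"], where T = "T 0"] assms(5,7) by auto
  have "e \<in> orth K"
    using K(2) subset_orth_singleton_iff by blast
  then obtain f where "f \<in> orth K" "norm f = 1" "cinner e f = 0"
    and "\<And>y. y \<in> orth K \<Longrightarrow> y = cinner e y *s e + cinner f y *s f"
    using dim2_orthonormal_completion[OF orth_subspace assms(8) _ assms(1)] by blast
  then interpret rank_one_iteration_dim2 e \<tau> T K f
    using K(1,2) by unfold_locales auto
  have T_lim: "(\<lambda>n. T n *v x) \<longlonglongrightarrow> lim T *v x" for x
    using convergent_T by (intro tendsto_matrix_vector_mult) (simp add: convergent_LIMSEQ_iff)
  have "lim T *v x = T0 *v x" if "x \<in> K" for x
    using LIMSEQ_unique[OF T_lim] T_on_K[OF that] assms(5) by simp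
  moreover have "lim T *v y = 0" if "y \<in> orth K" for y
    using LIMSEQ_unique[OF T_lim T_tendsto_zero_on_orth_K[OF det_0_pos T_ef_0_nonzero[OF K(3)] that]]
      assms(4,5) by simp
  ultimately show ?thesis using convergent_T by blast
qed

end
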